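(* Let $\sigma\subset N_{\mathbb{Q}}$ be a pointed rational polyhedral cone, $n=\dim N_{\mathbb{Q}}$, and let $P=Q+\sigma^{\vee}$ with $Q\subset M_{\mathbb{Q}}$ a polytope whose vertices lie in $M$. Then for every integer $e\ge n-1$ the polyhedron $eP$ is normal. In particular, every integrally closed homogeneous ideal of an affine toric surface $\mathbf{k}[\sigma^{\vee}\cap M]$ (with $n=2$) is normal.
   Context: $N$ lattice of rank $n$, $M$ its dual; $\sigma^{\vee}=\{m\in M_{\mathbb{Q}}: m(v)\ge0\ \forall v\in\sigma\}$. $eP$ is the dilation of $P$ by $e$. A polyhedron $P'=Q'+\sigma^{\vee}$ with $Q'$ a lattice polytope is normal if for every integer $e\ge1$, $(eP')\cap M=\{m_1+\cdots+m_e:\ m_i\in P'\cap M\}$. An ideal is normal if all its positive powers are integrally closed; homogeneous ideals of $\mathbf{k}[\sigma^{\vee}\cap M]$ are nonzero ideals generated by monomials $\chi^m$. *)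

theory Defs
  imports "HOL-Analysis.Analysis"
begin

text \<open>We identify N with Z^n and M with its dual Z^n (dual basis), so that
  N_Q = M_Q = Q^n, realised as the type rat ^ 'n with 'n finite, n = CARD('n).\<close>

definition pairing :: "rat ^ 'n \<Rightarrow> rat ^ 'n \<Rightarrow> rat" where
  "pairing m v = (\<Sum>i\<in>UNIV. m $ i * v $ i)"

definition lattice_pt :: "rat ^ 'n \<Rightarrow> bool" where
  "lattice_pt x \<longleftrightarrow> (\<forall>i. x $ i \<in> \<int>)"

definition cone_gen :: "(rat ^ 'n) set \<Rightarrow> (rat ^ 'n) set" where
  "cone_gen S = {x. \<exists>c. (\<forall>v\<in>S. c v \<ge> 0) \<and> x = (\<Sum>v\<in>S. c v *s v)}"

definition rational_polyhedral_cone :: "(rat ^ 'n) set \<Rightarrow> bool" where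
  "rational_polyhedral_cone \<sigma> \<longleftrightarrow> (\<exists>S. finite S \<and> \<sigma> = cone_gen S)"

definition pointed_cone :: "(rat ^ 'n) set \<Rightarrow> bool" where
  "pointed_cone \<sigma> \<longleftrightarrow> (\<forall>v. v \<in> \<sigma> \<and> - v \<in> \<sigma> \<longrightarrow> v = 0)"

definition dual_cone :: "(rat ^ 'n) set \<Rightarrow> (rat ^ 'n) set" where
  "dual_cone \<sigma> = {m. \<forall>v\<in>\<sigma>. pairing m v \<ge> 0}"

definition rat_conv :: "(rat ^ 'n) set \<Rightarrow> (rat ^ 'n) set" where
  "rat_conv V = {x. \<exists>c. (\<forall>v\<in>V. c v \<ge> 0) \<and> (\<Sum>v\<in>V. c v) = 1 \<and> x = (\<Sum>v\<in>V. c v *s v)}"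

definition minkowski_sum :: "(rat ^ 'n) set \<Rightarrow> (rat ^ 'n) set \<Rightarrow> (rat ^ 'n) set" where
  "minkowski_sum A B = {a + b | a b. a \<in> A \<and> b \<in> B}"

definition dilate :: "nat \<Rightarrow> (rat ^ 'n) set \<Rightarrow> (rat ^ 'n) set" where
  "dilate e P = (\<lambda>p. of_nat e *s p) ` P"

definition normal_polyhedron :: "(rat ^ 'n) set \<Rightarrow> bool" where
  "normal_polyhedron P \<longleftrightarrow>
     (\<forall>e::nat. e \<ge> 1 \<longrightarrow>
        {x \<in> dilate e P. lattice_pt x} =
        {x. \<exists>m. (\<forall>i<e. m i \<in> P \<and> lattice_pt (m i)) \<and> x = (\<Sum>i<e. m i)})"

end

theory Submission
  imports Defs
begin

text \<open>Let Q = conv V, C the dual cone, P_h = h Q + C, and T the set of lattice points of Q.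
  The heart of the proof is a peeling step: for h \<ge> n every lattice point x of P_h lies in
  p + P_(h-1) for some p \<in> T. Caratheodory's theorem, applied in homogeneous coordinates so
  that the direction in C counts among at most n + 1 independent vectors, writes
  x = \<Sum> l_u u + r c with affinely independent u \<in> T. If some l_u \<ge> 1, subtract u. Otherwise the
  bound on the number of terms forces h = n, r = 0 and a simplex with n + 1 vertices, and then
  z = \<Sum> u - x is a lattice point of that simplex. Exchanging a suitable vertex for z gives a
  simplex that still contains x but whose hull contains fewer points of T, so eventually the first
  case occurs. Peeling e lattice points at a time splits every lattice point of k (e P) into k
  lattice points of e P as soon as e \<ge> n - 1.\<close>

section \<open>Scaled convex hulls\<close>

definition scaled_hull :: "('a::linordered_field ^ 'n) set \<Rightarrow> 'a \<Rightarrow> ('a ^ 'n) set" where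
  "scaled_hull U h = {x. \<exists>c. (\<forall>v\<in>U. 0 \<le> c v) \<and> (\<Sum>v\<in>U. c v) = h \<and> x = (\<Sum>v\<in>U. c v *s v)}"

lemma rat_conv_eq_scaled_hull: "rat_conv U = scaled_hull U 1"
  unfolding rat_conv_def scaled_hull_def ..

lemma scaled_hull_scale:
  assumes "x \<in> scaled_hull U h" "0 \<le> r"
  shows "r *s x \<in> scaled_hull U (r * h)"
proof -
  obtain c where "\<forall>v\<in>U. 0 \<le> c v" "(\<Sum>v\<in>U. c v) = h" "x = (\<Sum>v\<in>U. c v *s v)"
    using assms(1) unfolding scaled_hull_def by blast
  then show ?thesis unfolding scaled_hull_def using assms(2)
    by (intro CollectI exI[of _ "\<lambda>v. r * c v"]) (auto simp: sum_distrib_left vec.scale_sum_right)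
qed

lemma scaled_hull_add:
  assumes "x \<in> scaled_hull U a" "y \<in> scaled_hull U b"
  shows "x + y \<in> scaled_hull U (a + b)"
proof -
  obtain c where "\<forall>v\<in>U. 0 \<le> c v" "(\<Sum>v\<in>U. c v) = a" "x = (\<Sum>v\<in>U. c v *s v)"
    using assms(1) unfolding scaled_hull_def by blast
  moreover obtain d where "\<forall>v\<in>U. 0 \<le> d v" "(\<Sum>v\<in>U. d v) = b" "y = (\<Sum>v\<in>U. d v *s v)"
    using assms(2) unfolding scaled_hull_def by blast
  ultimately show ?thesis unfolding scaled_hull_def
    by (intro CollectI exI[of _ "\<lambda>v. c v + d v"]) (auto simp: sum.distrib vec.scale_left_distrib)
qed

lemma zero_in_scaled_hull: "0 \<in> scaled_hull U 0"
  unfolding scaled_hull_def by (intro CollectI exI[of _ "\<lambda>v. 0"]) auto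

lemma scaled_hull_sum:
  assumes "finite I" "\<And>i. i \<in> I \<Longrightarrow> x i \<in> scaled_hull U (h i)"
  shows "(\<Sum>i\<in>I. x i) \<in> scaled_hull U (\<Sum>i\<in>I. h i)"
  using assms by (induction I rule: finite_induct) (auto intro: scaled_hull_add zero_in_scaled_hull)

lemma scaled_hull_remove_vertex:
  assumes "finite U" "u \<in> U" "1 \<le> l u" "\<forall>v\<in>U. 0 \<le> l v" "(\<Sum>v\<in>U. l v) = h"
  shows "(\<Sum>v\<in>U. l v *s v) - u \<in> scaled_hull U (h - 1)"
proof -
  define m where "m v = l v - (if v = u then 1 else 0)" for v
  have "(\<Sum>v\<in>U. m v) = h - 1"
    unfolding m_def using assms by (simp add: sum_subtractf)
  moreover have "(\<Sum>v\<in>U. m v *s v) = (\<Sum>v\<in>U. l v *s v) - u"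
  proof -
    have "(\<Sum>v\<in>U. m v *s v) = (\<Sum>v\<in>U. l v *s v - (if v = u then u else 0))"
      unfolding m_def by (rule sum.cong) (auto simp: vec.scale_left_diff_distrib)
    then show ?thesis using assms by (simp add: sum_subtractf)
  qed
  moreover have "\<forall>v\<in>U. 0 \<le> m v" unfolding m_def using assms by auto
  ultimately show ?thesis unfolding scaled_hull_def by (intro CollectI exI[of _ m]) simp
qed

lemma vertex_in_scaled_hull:
  assumes "finite U" "u \<in> U"
  shows "u \<in> scaled_hull U 1"
proof -
  have "(\<Sum>v\<in>U. (if v = u then 1 else 0) *s v) = (\<Sum>v\<in>U. if v = u then v else 0)"
    by (rule sum.cong) auto
  then show ?thesis unfolding scaled_hull_def using assms
    by (intro CollectI exI[of _ "\<lambda>v. if v = u then 1 else 0"]) auto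
qed

lemma scaled_hull_subset_scaled_hull:
  assumes "finite W" "W \<subseteq> scaled_hull U 1"
  shows "scaled_hull W h \<subseteq> scaled_hull U h"
proof
  fix x assume "x \<in> scaled_hull W h"
  then obtain c where c: "\<forall>w\<in>W. 0 \<le> c w" "(\<Sum>w\<in>W. c w) = h" "x = (\<Sum>w\<in>W. c w *s w)"
    unfolding scaled_hull_def by blast
  have "(\<Sum>w\<in>W. c w *s w) \<in> scaled_hull U (\<Sum>w\<in>W. c w * 1)"
    using assms c(1) by (intro scaled_hull_sum scaled_hull_scale) auto
  then show "x \<in> scaled_hull U h" using c(2,3) by simp
qed

lemma scaled_hull_mono:
  assumes "U \<subseteq> W" "finite W"
  shows "scaled_hull U h \<subseteq> scaled_hull W h"
  using assms finite_subset[OF assms]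
  by (intro scaled_hull_subset_scaled_hull) (auto intro: vertex_in_scaled_hull)

section \<open>Caratheodory's theorem\<close>

lemma dependent_positive_comb_reduce:
  fixes W :: "('a::linordered_field ^ 'm) set"
  assumes fin: "finite W" and dep: "vec.dependent W" and pos: "\<forall>w\<in>W. 0 < l w"
  shows "\<exists>m w. w \<in> W \<and> m w = 0 \<and> (\<forall>v\<in>W. 0 \<le> m v) \<and>
    (\<Sum>v\<in>W. m v *s v) = (\<Sum>v\<in>W. l v *s v)"
proof -
  obtain a where a: "\<exists>v\<in>W. a v \<noteq> 0" "(\<Sum>v\<in>W. a v *s v) = 0"
    using dep vec.dependent_finite[OF fin] by blast
  obtain b where b: "\<exists>v\<in>W. 0 < b v" "(\<Sum>v\<in>W. b v *s v) = 0"
  proof (cases "\<exists>v\<in>W. 0 < a v")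
    case True then show ?thesis using a that by blast
  next
    case False
    then have "\<exists>v\<in>W. 0 < - a v" using a(1) by force
    moreover have "(\<Sum>v\<in>W. - a v *s v) = 0" using a(2) by (simp add: sum_negf)
    ultimately show ?thesis by (rule that)
  qed
  define S where "S = {v\<in>W. 0 < b v}"
  have "finite S" and "S \<noteq> {}" using fin b(1) unfolding S_def by auto
  define w where "w = arg_min_on (\<lambda>v. l v / b v) S"
  have w: "w \<in> S" unfolding w_def by (rule arg_min_if_finite(1)) fact+
  have wmin: "l w / b w \<le> l v / b v" if "v \<in> S" for v
    using arg_min_least[OF \<open>finite S\<close> \<open>S \<noteq> {}\<close> that, of "\<lambda>v. l v / b v"]
    unfolding w_def by simp
  \<comment> \<open>moving along the relation b until the first coefficient vanishes\<close>
  define t where "t = l w / b w"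
  define m where "m v = l v - t * b v" for v
  have "0 < t" using w pos unfolding S_def t_def by auto
  have "0 \<le> m v" if "v \<in> W" for v
  proof (cases "0 < b v")
    case True
    then have "t \<le> l v / b v" using wmin that unfolding S_def t_def by auto
    then show ?thesis using True unfolding m_def by (simp add: pos_le_divide_eq)
  next
    case False
    then have "t * b v \<le> 0" using \<open>0 < t\<close> by (simp add: mult_nonneg_nonpos)
    moreover have "0 < l v" using pos that by blast
    ultimately show ?thesis unfolding m_def by simp
  qed
  moreover have "m w = 0" using w unfolding S_def m_def t_def by simp
  moreover have "(\<Sum>v\<in>W. m v *s v) = (\<Sum>v\<in>W. l v *s v)"
  proof -
    have "(\<Sum>v\<in>W. m v *s v) = (\<Sum>v\<in>W. l v *s v) - t *s (\<Sum>v\<in>W. b v *s v)"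
      unfolding m_def vec.scale_sum_right sum_subtractf[symmetric]
      by (rule sum.cong) (auto simp: vec.scale_left_diff_distrib)
    then show ?thesis using b(2) by simp
  qed
  ultimately show ?thesis using w unfolding S_def by (intro exI[of _ m] exI[of _ w]) auto
qed

lemma conic_caratheodory:
  fixes W :: "('a::linordered_field ^ 'm) set"
  assumes "finite W" "\<forall>w\<in>W. 0 \<le> l w"
  shows "\<exists>W' l'. W' \<subseteq> W \<and> vec.independent W' \<and> (\<forall>w\<in>W'. 0 < l' w) \<and>
    (\<Sum>w\<in>W'. l' w *s w) = (\<Sum>w\<in>W. l w *s w)"
  using assms
proof (induction W arbitrary: l rule: finite_psubset_induct)
  case (psubset W)
  have drop: "\<exists>W' l'. W' \<subseteq> W \<and> vec.independent W' \<and> (\<forall>w\<in>W'. 0 < l' w) \<and>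
      (\<Sum>w\<in>W'. l' w *s w) = (\<Sum>w\<in>W. l w *s w)"
    if "w \<in> W" "m w = 0" "\<forall>v\<in>W. 0 \<le> m v" "(\<Sum>v\<in>W. m v *s v) = (\<Sum>v\<in>W. l v *s v)" for w m
  proof -
    have sum_eq: "(\<Sum>v\<in>W - {w}. m v *s v) = (\<Sum>v\<in>W. l v *s v)"
      using that psubset.hyps(1) by (simp add: sum.remove)
    have "W - {w} \<subset> W" "\<forall>v\<in>W - {w}. 0 \<le> m v" using that(1,3) by auto
    from psubset.IH[OF this] obtain W' l' where "W' \<subseteq> W - {w}" "vec.independent W'"
      "\<forall>v\<in>W'. 0 < l' v" "(\<Sum>v\<in>W'. l' v *s v) = (\<Sum>v\<in>W - {w}. m v *s v)"
      by blast
    then show ?thesis using sum_eq by (intro exI[of _ W'] exI[of _ l']) auto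
  qed
  show ?case
  proof (cases "\<exists>w\<in>W. l w = 0")
    case True
    then obtain w where "w \<in> W" "l w = 0" by blast
    then show ?thesis using drop[of w l] psubset.prems by simp
  next
    case False
    then have pos: "\<forall>w\<in>W. 0 < l w" using psubset.prems by force
    show ?thesis
    proof (cases "vec.independent W")
      case True
      then show ?thesis using pos by (intro exI[of _ W] exI[of _ l]) auto
    next
      case False
      then obtain m w where "w \<in> W" "m w = 0" "\<forall>v\<in>W. 0 \<le> m v"
        "(\<Sum>v\<in>W. m v *s v) = (\<Sum>v\<in>W. l v *s v)"
        using dependent_positive_comb_reduce[OF psubset.hyps(1) _ pos] by blast
      then show ?thesis using drop by blast
    qed
  qed
qed

text \<open>Homogeneous coordinates: the extra index None carries 1 for points and 0 for directions.\<close>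
definition homog :: "'a::zero \<Rightarrow> 'a ^ 'n \<Rightarrow> 'a ^ 'n option" where
  "homog t u = (\<chi> i. case i of None \<Rightarrow> t | Some k \<Rightarrow> u $ k)"

lemma homog_nth [simp]: "homog t u $ None = t" "homog t u $ Some k = u $ k"
  unfolding homog_def by simp_all

lemma homog_eq_iff [simp]: "homog t u = homog s v \<longleftrightarrow> t = s \<and> u = v"
  by (metis homog_nth vec_eq_iff)

lemma homog_zero [simp]: "homog 0 0 = 0"
  unfolding vec_eq_iff by (simp add: homog_def split: option.split)

lemma homog_add: "homog t u + homog s v = homog (t + s) (u + v)"
  unfolding vec_eq_iff by (simp add: homog_def split: option.split)

lemma scale_homog: "r *s homog t u = homog (r * t) (r *s u)"
  unfolding vec_eq_iff by (simp add: homog_def split: option.split)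

lemma sum_homog: "(\<Sum>i\<in>I. homog (t i) (u i)) = homog (\<Sum>i\<in>I. t i) (\<Sum>i\<in>I. u i)"
  unfolding vec_eq_iff by (simp add: homog_def sum_component split: option.split)

lemma sum_over_homog_points:
  fixes d :: "'a::zero_neq_one ^ 'n"
  assumes "finite W" "W \<subseteq> range (homog 1) \<union> {homog 0 d}"
  shows "(\<Sum>w\<in>W. g w) =
    (\<Sum>u\<in>{u. homog 1 u \<in> W}. g (homog 1 u)) + (if homog 0 d \<in> W then g (homog 0 d) else 0)"
proof -
  have W: "W = homog 1 ` {u. homog 1 u \<in> W} \<union> (W \<inter> {homog 0 d})" using assms(2) by auto
  have "finite (homog 1 ` {u. homog 1 u \<in> W})" using assms(1) by (rule finite_subset[rotated]) auto
  then have "(\<Sum>w\<in>W. g w) = (\<Sum>w\<in>homog 1 ` {u. homog 1 u \<in> W}. g w) + (\<Sum>w\<in>W \<inter> {homog 0 d}. g w)"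
    by (subst W, intro sum.union_disjoint) auto
  moreover have "inj (homog (1::'a))" by (rule injI) simp
  ultimately show ?thesis by (simp add: sum.reindex inj_on_def Int_insert_right)
qed

lemma sum_scale_homog_points:
  fixes d :: "'a::field ^ 'n"
  assumes "finite W" "W \<subseteq> range (homog 1) \<union> {homog 0 d}"
  shows "(\<Sum>w\<in>W. L w *s w) = homog (\<Sum>u\<in>{u. homog 1 u \<in> W}. L (homog 1 u))
    ((\<Sum>u\<in>{u. homog 1 u \<in> W}. L (homog 1 u) *s u) +
      (if homog 0 d \<in> W then L (homog 0 d) else 0) *s d)"
  unfolding sum_over_homog_points[OF assms] by (simp add: scale_homog sum_homog homog_add)

definition affine_indep :: "('a::field ^ 'n) set \<Rightarrow> bool" where
  "affine_indep U \<longleftrightarrow>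
     (\<forall>a. (\<Sum>u\<in>U. a u) = 0 \<longrightarrow> (\<Sum>u\<in>U. a u *s u) = 0 \<longrightarrow> (\<forall>u\<in>U. a u = 0))"

lemma affine_indep_of_homog_independent:
  fixes d :: "'a::field ^ 'n"
  assumes indep: "vec.independent W" and W: "W \<subseteq> range (homog 1) \<union> {homog 0 d}"
  shows "affine_indep {u. homog 1 u \<in> W}"
  unfolding affine_indep_def
proof (intro allI impI)
  fix a assume a: "(\<Sum>u\<in>{u. homog 1 u \<in> W}. a u) = 0" "(\<Sum>u\<in>{u. homog 1 u \<in> W}. a u *s u) = 0"
  define c where "c w = (if w $ None = 0 then 0 else a (\<chi> k. w $ Some k))" for w
  have "finite W" using vec.independent_bound_general[OF indep] by blast
  then have "(\<Sum>w\<in>W. c w *s w) = 0"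
    using a by (simp add: sum_scale_homog_points[OF _ W] c_def)
  then have "\<forall>w\<in>W. c w = 0" using indep by (simp add: vec.independent_explicit)
  then show "\<forall>u\<in>{u. homog 1 u \<in> W}. a u = 0" unfolding c_def by force
qed

text \<open>The conic version applied to the homogenized points of U and the direction d.\<close>
lemma affine_caratheodory:
  fixes U :: "('a::linordered_field ^ 'n) set"
  assumes finU: "finite U" and l: "\<forall>u\<in>U. 0 \<le> l u" and "0 \<le> \<rho>"
  shows "\<exists>U' l' r. U' \<subseteq> U \<and> affine_indep U' \<and> (\<forall>u\<in>U'. 0 < l' u) \<and> 0 \<le> r \<and>
    (\<rho> = 0 \<longrightarrow> r = 0) \<and> card U' + (if r = 0 then 0 else 1) \<le> CARD('n) + 1 \<and>
    (\<Sum>u\<in>U'. l' u) = (\<Sum>u\<in>U. l u) \<and> (\<Sum>u\<in>U'. l' u *s u) + r *s d = (\<Sum>u\<in>U. l u *s u) + \<rho> *s d"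
proof -
  define W where "W = homog 1 ` U \<union> (if \<rho> = 0 then {} else {homog 0 d})"
  define L where "L w = (if w $ None = 0 then \<rho> else l (\<chi> k. w $ Some k))" for w
  have finW: "finite W" unfolding W_def using finU by simp
  have W_sub: "W \<subseteq> range (homog 1) \<union> {homog 0 d}" unfolding W_def by auto
  have W_points: "{u. homog 1 u \<in> W} = U" unfolding W_def by auto
  have "\<forall>w\<in>W. 0 \<le> L w" unfolding W_def L_def using l \<open>0 \<le> \<rho>\<close> by auto
  then obtain W' L' where W': "W' \<subseteq> W" "vec.independent W'" "\<forall>w\<in>W'. 0 < L' w"
    and sum_W': "(\<Sum>w\<in>W'. L' w *s w) = (\<Sum>w\<in>W. L w *s w)"
    using conic_caratheodory[OF finW] by blast
  have finW': "finite W'" using W'(1) finW by (rule finite_subset)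
  have W'_sub: "W' \<subseteq> range (homog 1) \<union> {homog 0 d}" using W'(1) W_sub by blast
  define U' where "U' = {u. homog 1 u \<in> W'}"
  define r where "r = (if homog 0 d \<in> W' then L' (homog 0 d) else 0)"
  define l' where "l' u = L' (homog 1 u)" for u
  have "(\<Sum>w\<in>W. L w *s w) = homog (\<Sum>u\<in>U. l u) ((\<Sum>u\<in>U. l u *s u) + \<rho> *s d)"
    unfolding sum_scale_homog_points[OF finW W_sub] W_points by (auto simp: W_def L_def)
  then have sums: "(\<Sum>u\<in>U'. l' u) = (\<Sum>u\<in>U. l u)"
    "(\<Sum>u\<in>U'. l' u *s u) + r *s d = (\<Sum>u\<in>U. l u *s u) + \<rho> *s d"
    using sum_W' unfolding sum_scale_homog_points[OF finW' W'_sub] U'_def l'_def r_def by simp_all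
  have "card W' = card U' + (if r = 0 then 0 else 1)"
    using sum_over_homog_points[OF finW' W'_sub, of "\<lambda>_. 1::nat"] W'(3)
    unfolding U'_def r_def by auto
  moreover have "card W' \<le> CARD('n option)"
    using vec.independent_bound_general[OF W'(2)] dim_subset_UNIV_cart_gen[of W'] by simp
  ultimately have "card U' + (if r = 0 then 0 else 1) \<le> CARD('n) + 1" by simp
  moreover have "affine_indep U'"
    unfolding U'_def by (rule affine_indep_of_homog_independent[OF W'(2) W'_sub])
  moreover have "U' \<subseteq> U" unfolding U'_def using W'(1) W_points by blast
  moreover have "0 \<le> r" "\<rho> = 0 \<longrightarrow> r = 0" "\<forall>u\<in>U'. 0 < l' u"
    using W'(1,3) unfolding W_def r_def l'_def U'_def by auto
  ultimately show ?thesis using sums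
    by (intro exI[of _ U'] exI[of _ l'] exI[of _ r]) simp
qed

lemma caratheodory_vertex_or_simplex:
  fixes U :: "('a::linordered_field ^ 'n) set"
  assumes finU: "finite U" and l: "\<forall>u\<in>U. 0 \<le> l u" and "0 \<le> \<rho>"
    and sum_l: "(\<Sum>u\<in>U. l u) = of_nat h" and h: "CARD('n) \<le> h"
    and x: "x = (\<Sum>u\<in>U. l u *s u) + \<rho> *s d"
  obtains (vertex) u q r where "u \<in> U" "q \<in> scaled_hull U (of_nat h - 1)" "0 \<le> r"
      "\<rho> = 0 \<longrightarrow> r = 0" "x - u = q + r *s d"
    | (simplex) U' l' where "U' \<subseteq> U" "affine_indep U'" "card U' = h + 1"
      "\<forall>u\<in>U'. 0 < l' u \<and> l' u < 1" "(\<Sum>u\<in>U'. l' u) = of_nat h" "x = (\<Sum>u\<in>U'. l' u *s u)"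
proof -
  obtain U' l' r where U': "U' \<subseteq> U" "affine_indep U'" "\<forall>u\<in>U'. 0 < l' u" "0 \<le> r"
    "\<rho> = 0 \<longrightarrow> r = 0" "card U' + (if r = 0 then 0 else 1) \<le> CARD('n) + 1"
    "(\<Sum>u\<in>U'. l' u) = (\<Sum>u\<in>U. l u)" "(\<Sum>u\<in>U'. l' u *s u) + r *s d = x"
    using affine_caratheodory[OF finU l \<open>0 \<le> \<rho>\<close>, of d] unfolding x by blast
  note sum_l' = U'(7)[unfolded sum_l] and x' = U'(8)[symmetric]
  have finU': "finite U'" using U'(1) finU by (rule finite_subset)
  show thesis
  proof (cases "\<exists>u\<in>U'. 1 \<le> l' u")
    case True
    then obtain u where u: "u \<in> U'" "1 \<le> l' u" by blast
    have "(\<Sum>v\<in>U'. l' v *s v) - u \<in> scaled_hull U' (of_nat h - 1)"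
      using scaled_hull_remove_vertex[OF finU' u(1), of l' "of_nat h"] u(2) U'(3) sum_l'
        by (simp add: less_imp_le)
    then have "(\<Sum>v\<in>U'. l' v *s v) - u \<in> scaled_hull U (of_nat h - 1)"
      using scaled_hull_mono[OF U'(1) finU] by blast
    moreover have "x - u = ((\<Sum>v\<in>U'. l' v *s v) - u) + r *s d" using x' by simp
    ultimately show thesis using vertex u U'(1,4,5) by blast
  next
    case False
    then have lt1: "\<forall>u\<in>U'. l' u < 1" by auto
    have "U' \<noteq> {}"
    proof
      assume "U' = {}"
      then have "h = 0" using sum_l' by simp
      then show False using h by simp
    qed
    then have "(\<Sum>u\<in>U'. l' u) < (\<Sum>u\<in>U'. 1)" using finU' lt1 by (intro sum_strict_mono) auto
    then have "h < card U'" using sum_l' by simp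
    then have "card U' = h + 1" "r = 0" using U'(6) h by (auto split: if_splits)
    with U'(1,2,3) sum_l' x' lt1 show thesis by (intro simplex[of U' l']) simp_all
  qed
qed

section \<open>Exchanging a vertex of a simplex\<close>

lemma comb_notin_affine_indep:
  fixes U :: "('a::field ^ 'n) set"
  assumes "finite U" "affine_indep U" "\<forall>u\<in>U. \<mu> u \<noteq> 1" "(\<Sum>u\<in>U. \<mu> u) = 1"
  shows "(\<Sum>u\<in>U. \<mu> u *s u) \<notin> U"
proof -
  define w where "w = (\<Sum>u\<in>U. \<mu> u *s u)"
  have "w \<notin> U"
  proof
    assume "w \<in> U"
    define a where "a u = \<mu> u - (if u = w then 1 else 0)" for u
    have sum_a: "(\<Sum>u\<in>U. a u) = 0"
      unfolding a_def using assms(1,4) \<open>w \<in> U\<close> by (simp add: sum_subtractf)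
    have "(\<Sum>u\<in>U. a u *s u) = (\<Sum>u\<in>U. \<mu> u *s u - (if u = w then u else 0))"
      unfolding a_def by (rule sum.cong) (auto simp: vec.scale_left_diff_distrib)
    then have "(\<Sum>u\<in>U. a u *s u) = 0" using assms(1) \<open>w \<in> U\<close> unfolding w_def
      by (simp add: sum_subtractf)
    with sum_a have "a w = 0" using assms(2) \<open>w \<in> U\<close> unfolding affine_indep_def by blast
    then show False using assms(3) \<open>w \<in> U\<close> unfolding a_def by simp
  qed
  then show ?thesis unfolding w_def .
qed

lemma exchange_vertex_scaled_hull:
  fixes U :: "('a::linordered_field ^ 'n) set"
  assumes finU: "finite U" and "z \<notin> U" and \<mu>: "\<forall>u\<in>U. 0 < \<mu> u" "(\<Sum>u\<in>U. \<mu> u) = 1"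
    and z: "z = (\<Sum>u\<in>U. \<mu> u *s u)" and l: "\<forall>u\<in>U. 0 \<le> l u"
    and "j \<in> U" and j_min: "\<forall>u\<in>U. l j / \<mu> j \<le> l u / \<mu> u"
  shows "(\<Sum>u\<in>U. l u *s u) \<in> scaled_hull (insert z (U - {j})) (\<Sum>u\<in>U. l u)"
proof -
  define t where "t = l j / \<mu> j"
  define k where "k u = l u - t * \<mu> u" for u
  define m where "m u = (if u = z then t else k u)" for u
  have "0 \<le> t" unfolding t_def using l \<mu>(1) \<open>j \<in> U\<close> by (intro divide_nonneg_pos) auto
  have "0 < \<mu> j" using \<mu>(1) \<open>j \<in> U\<close> by blast
  then have "k j = 0" unfolding k_def t_def by simp
  have k_nonneg: "0 \<le> k u" if "u \<in> U" for u
  proof -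
    have "t \<le> l u / \<mu> u" using j_min that unfolding t_def by blast
    then show ?thesis unfolding k_def using \<mu> that by (simp add: le_divide_eq)
  qed
  have z_new: "z \<notin> U - {j}" using \<open>z \<notin> U\<close> by blast
  have m_on_U: "m u = k u" if "u \<in> U" for u using that \<open>z \<notin> U\<close> unfolding m_def by auto
  have drop_j: "(\<Sum>u\<in>U - {j}. f u) = (\<Sum>u\<in>U. f u)" if "f j = 0" for f :: "_ \<Rightarrow> 'b::ab_group_add"
    using finU \<open>j \<in> U\<close> that by (simp add: sum_diff1)
  have "(\<Sum>u\<in>insert z (U - {j}). m u) = t + (\<Sum>u\<in>U. k u)"
    using finU z_new m_on_U \<open>k j = 0\<close> drop_j[of k] by (simp add: m_def)
  also have "\<dots> = (\<Sum>u\<in>U. l u)"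
    unfolding k_def using \<mu>(2) by (simp add: sum_subtractf sum_distrib_left[symmetric])
  finally have sum_m: "(\<Sum>u\<in>insert z (U - {j}). m u) = (\<Sum>u\<in>U. l u)" .
  have "(\<Sum>u\<in>insert z (U - {j}). m u *s u) = t *s z + (\<Sum>u\<in>U. k u *s u)"
    using finU z_new m_on_U \<open>k j = 0\<close> drop_j[of "\<lambda>u. k u *s u"] by (simp add: m_def)
  also have "(\<Sum>u\<in>U. k u *s u) = (\<Sum>u\<in>U. l u *s u) - t *s z"
    unfolding z k_def vec.scale_sum_right vec.scale_scale sum_subtractf[symmetric]
    by (rule sum.cong) (auto simp: vec.scale_left_diff_distrib)
  finally have "(\<Sum>u\<in>insert z (U - {j}). m u *s u) = (\<Sum>u\<in>U. l u *s u)" by simp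
  moreover have "\<forall>u\<in>insert z (U - {j}). 0 \<le> m u"
    using \<open>0 \<le> t\<close> k_nonneg m_on_U by (auto simp: m_def)
  ultimately show ?thesis using sum_m unfolding scaled_hull_def
    by (intro CollectI exI[of _ m]) simp
qed

lemma vertex_notin_exchanged_hull:
  fixes U :: "('a::linordered_field ^ 'n) set"
  assumes finU: "finite U" and indep: "affine_indep U" and "z \<notin> U" and "j \<in> U"
    and \<mu>: "\<forall>u\<in>U. 0 \<le> \<mu> u" "(\<Sum>u\<in>U. \<mu> u) = 1" "\<mu> j < 1" and z: "z = (\<Sum>u\<in>U. \<mu> u *s u)"
  shows "j \<notin> scaled_hull (insert z (U - {j})) 1"
proof
  assume "j \<in> scaled_hull (insert z (U - {j})) 1"
  then obtain \<beta> where \<beta>: "\<forall>v\<in>insert z (U - {j}). 0 \<le> \<beta> v"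
    "(\<Sum>v\<in>insert z (U - {j}). \<beta> v) = 1" "j = (\<Sum>v\<in>insert z (U - {j}). \<beta> v *s v)"
    unfolding scaled_hull_def by blast
  have z_new: "z \<notin> U - {j}" using \<open>z \<notin> U\<close> by blast
  have sum_\<beta>: "\<beta> z + (\<Sum>v\<in>U - {j}. \<beta> v) = 1" using \<beta>(2) finU z_new by simp
  have comb_\<beta>: "\<beta> z *s z + (\<Sum>v\<in>U - {j}. \<beta> v *s v) = j" using \<beta>(3) finU z_new by simp
  have "0 \<le> (\<Sum>v\<in>U - {j}. \<beta> v)" using \<beta>(1) by (intro sum_nonneg) auto
  then have "\<beta> z \<le> 1" using sum_\<beta> by linarith
  \<comment> \<open>substituting z turns the representation of j into an affine relation on U\<close>
  define a where "a u = \<beta> z * \<mu> u + (if u = j then -1 else \<beta> u)" for u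
  have drop_j: "(\<Sum>u\<in>U. if u = j then -1 else \<beta> u) = -1 + (\<Sum>u\<in>U - {j}. \<beta> u)"
    "(\<Sum>u\<in>U. (if u = j then -1 else \<beta> u) *s u) = - j + (\<Sum>u\<in>U - {j}. \<beta> u *s u)"
    using finU \<open>j \<in> U\<close> by (simp_all add: sum.remove)
  have "(\<Sum>u\<in>U. a u) = \<beta> z * (\<Sum>u\<in>U. \<mu> u) + (-1 + (\<Sum>u\<in>U - {j}. \<beta> u))"
    unfolding a_def drop_j(1)[symmetric] by (simp add: sum.distrib sum_distrib_left)
  then have sum_a: "(\<Sum>u\<in>U. a u) = 0" using \<mu>(2) sum_\<beta> by simp
  have "(\<Sum>u\<in>U. a u *s u) = \<beta> z *s z + (- j + (\<Sum>u\<in>U - {j}. \<beta> u *s u))"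
    unfolding a_def z drop_j(2)[symmetric]
    by (simp add: vec.scale_left_distrib sum.distrib vec.scale_sum_right vec.scale_scale)
  then have "(\<Sum>u\<in>U. a u *s u) = 0" using comb_\<beta> by (simp add: algebra_simps)
  with sum_a have "a j = 0" using indep \<open>j \<in> U\<close> unfolding affine_indep_def by blast
  moreover have "\<beta> z * \<mu> j < 1"
    using mult_right_mono[OF \<open>\<beta> z \<le> 1\<close>, of "\<mu> j"] \<mu> \<open>j \<in> U\<close> by simp
  ultimately show False unfolding a_def by simp
qed

section \<open>Peeling off lattice points\<close>

lemma lattice_pt_diff: "lattice_pt a \<Longrightarrow> lattice_pt b \<Longrightarrow> lattice_pt (a - b)"
  unfolding lattice_pt_def by auto

lemma lattice_pt_sum: "(\<And>i. i \<in> I \<Longrightarrow> lattice_pt (f i)) \<Longrightarrow> lattice_pt (\<Sum>i\<in>I. f i)"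
  unfolding lattice_pt_def by (auto simp: sum_component intro: Ints_sum)

definition lattice_saturated :: "(rat ^ 'n) set \<Rightarrow> bool" where
  "lattice_saturated T \<longleftrightarrow> (\<forall>z\<in>scaled_hull T 1. lattice_pt z \<longrightarrow> z \<in> T)"

lemma lattice_simplex_exchange:
  fixes T :: "(rat ^ 'n) set"
  assumes finT: "finite T" and sat: "lattice_saturated T" and latT: "\<forall>t\<in>T. lattice_pt t"
    and x: "lattice_pt x" and "U \<subseteq> T" and indep: "affine_indep U" and card_U: "card U = h + 1"
    and l: "\<forall>u\<in>U. 0 < l u \<and> l u < 1" "(\<Sum>u\<in>U. l u) = of_nat h" "x = (\<Sum>u\<in>U. l u *s u)"
  shows "\<exists>U'\<subseteq>T. x \<in> scaled_hull U' (of_nat h) \<and> scaled_hull U' 1 \<subseteq> scaled_hull U 1 \<and>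
    (\<exists>j\<in>U. j \<notin> scaled_hull U' 1)"
proof -
  have finU: "finite U" using \<open>U \<subseteq> T\<close> finT by (rule finite_subset)
  have "U \<noteq> {}" using card_U by auto
  \<comment> \<open>the complementary weights 1 - l sum to (h + 1) - h = 1, giving a new lattice point z\<close>
  define \<mu> where "\<mu> u = 1 - l u" for u
  define z where "z = (\<Sum>u\<in>U. \<mu> u *s u)"
  have \<mu>: "\<forall>u\<in>U. 0 < \<mu> u \<and> \<mu> u < 1" using l(1) unfolding \<mu>_def by auto
  have sum_\<mu>: "(\<Sum>u\<in>U. \<mu> u) = 1" unfolding \<mu>_def using l(2) card_U by (simp add: sum_subtractf)
  have "z = (\<Sum>u\<in>U. u) - x"
    unfolding z_def \<mu>_def l(3) by (simp add: vec.scale_left_diff_distrib sum_subtractf)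
  then have "lattice_pt z" using latT \<open>U \<subseteq> T\<close> x by (auto intro: lattice_pt_diff lattice_pt_sum)
  moreover have z_hull: "z \<in> scaled_hull U 1"
    unfolding z_def scaled_hull_def using \<mu> sum_\<mu> by (intro CollectI exI[of _ \<mu>]) auto
  moreover have "z \<in> scaled_hull T 1" using z_hull scaled_hull_mono[OF \<open>U \<subseteq> T\<close> finT] by blast
  ultimately have "z \<in> T" using sat unfolding lattice_saturated_def by blast
  have "\<forall>u\<in>U. \<mu> u \<noteq> 1" using \<mu> by auto
  then have "z \<notin> U" unfolding z_def by (rule comb_notin_affine_indep[OF finU indep _ sum_\<mu>])
  define j where "j = arg_min_on (\<lambda>u. l u / \<mu> u) U"
  have "j \<in> U" unfolding j_def using finU \<open>U \<noteq> {}\<close> by (rule arg_min_if_finite(1))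
  have j_min: "\<forall>u\<in>U. l j / \<mu> j \<le> l u / \<mu> u"
    using arg_min_least[OF finU \<open>U \<noteq> {}\<close>, of _ "\<lambda>u. l u / \<mu> u"] unfolding j_def by simp
  define U' where "U' = insert z (U - {j})"
  have "U' \<subseteq> T" unfolding U'_def using \<open>z \<in> T\<close> \<open>U \<subseteq> T\<close> by blast
  moreover have "x \<in> scaled_hull U' (of_nat h)"
    using exchange_vertex_scaled_hull[OF finU \<open>z \<notin> U\<close> _ sum_\<mu> z_def _ \<open>j \<in> U\<close> j_min] \<mu> l
    unfolding U'_def by (simp add: less_imp_le)
  moreover have "scaled_hull U' 1 \<subseteq> scaled_hull U 1"
    using z_hull vertex_in_scaled_hull[OF finU] finU unfolding U'_def
    by (intro scaled_hull_subset_scaled_hull) auto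
  moreover have "j \<notin> scaled_hull U' 1"
    using vertex_notin_exchanged_hull[OF finU indep \<open>z \<notin> U\<close> \<open>j \<in> U\<close> _ sum_\<mu> _ z_def] \<mu> \<open>j \<in> U\<close>
    unfolding U'_def by (simp add: less_imp_le)
  ultimately show ?thesis using \<open>j \<in> U\<close> by (intro exI[of _ U'] conjI bexI[of _ j])
qed

lemma lattice_point_peel_from_hull:
  fixes T :: "(rat ^ 'n) set"
  assumes finT: "finite T" and sat: "lattice_saturated T" and latT: "\<forall>t\<in>T. lattice_pt t"
    and x: "lattice_pt x" and h: "CARD('n) \<le> h"
  shows "U \<subseteq> T \<Longrightarrow> x \<in> scaled_hull U (of_nat h) \<Longrightarrow> \<exists>p\<in>T. x - p \<in> scaled_hull T (of_nat h - 1)"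
proof (induction "card (T \<inter> scaled_hull U 1)" arbitrary: U rule: less_induct)
  case less
  have finU: "finite U" using less.prems(1) finT by (rule finite_subset)
  obtain l where l: "\<forall>v\<in>U. 0 \<le> l v" "(\<Sum>v\<in>U. l v) = of_nat h" "x = (\<Sum>v\<in>U. l v *s v) + 0 *s 0"
    using less.prems(2) unfolding scaled_hull_def by auto
  show ?case
    using finU l(1) order_refl l(2) h l(3)
  proof (cases rule: caratheodory_vertex_or_simplex)
    case (vertex u q r)
    then have "x - u \<in> scaled_hull T (of_nat h - 1)" using scaled_hull_mono[OF less.prems(1) finT]
      by auto
    then show ?thesis using vertex(1) less.prems(1) by blast
  next
    case (simplex U' l')
    have "U' \<subseteq> T" using simplex(1) less.prems(1) by blast
    then obtain U'' j where U'': "U'' \<subseteq> T" "x \<in> scaled_hull U'' (of_nat h)"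
      "scaled_hull U'' 1 \<subseteq> scaled_hull U' 1" "j \<in> U'" "j \<notin> scaled_hull U'' 1"
      using lattice_simplex_exchange[OF finT sat latT x _ simplex(2-6)] by blast
    have U'_U: "scaled_hull U' 1 \<subseteq> scaled_hull U 1" using simplex(1) finU by (rule scaled_hull_mono)
    have "j \<in> T \<inter> scaled_hull U 1"
      using U''(4) \<open>U' \<subseteq> T\<close> U'_U vertex_in_scaled_hull[OF finite_subset[OF simplex(1) finU]]
        by blast
    then have "T \<inter> scaled_hull U'' 1 \<subset> T \<inter> scaled_hull U 1" using U''(3,5) U'_U by blast
    then have "card (T \<inter> scaled_hull U'' 1) < card (T \<inter> scaled_hull U 1)"
      using finT by (intro psubset_card_mono) auto
    then show ?thesis using less.hyps U''(1,2) by blast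
  qed
qed

definition rat_convex_cone :: "(rat ^ 'n) set \<Rightarrow> bool" where
  "rat_convex_cone C \<longleftrightarrow> 0 \<in> C \<and> (\<forall>x\<in>C. \<forall>y\<in>C. x + y \<in> C) \<and> (\<forall>r\<ge>0. \<forall>x\<in>C. r *s x \<in> C)"

lemma lattice_point_peel:
  fixes T :: "(rat ^ 'n) set"
  assumes finT: "finite T" and sat: "lattice_saturated T" and latT: "\<forall>t\<in>T. lattice_pt t"
    and C: "rat_convex_cone C" and x: "lattice_pt x" and h: "CARD('n) \<le> h"
    and x_P: "x \<in> minkowski_sum (scaled_hull T (of_nat h)) C"
  shows "\<exists>p\<in>T. x - p \<in> minkowski_sum (scaled_hull T (of_nat h - 1)) C"
proof -
  obtain l c where l: "\<forall>v\<in>T. 0 \<le> l v" "(\<Sum>v\<in>T. l v) = of_nat h" and "c \<in> C"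
    and x_eq: "x = (\<Sum>v\<in>T. l v *s v) + 1 *s c"
    using x_P unfolding minkowski_sum_def scaled_hull_def by auto
  show ?thesis
    using finT l(1) zero_le_one l(2) h x_eq
  proof (cases rule: caratheodory_vertex_or_simplex)
    case (vertex u q r)
    then have "r *s c \<in> C" using C \<open>c \<in> C\<close> unfolding rat_convex_cone_def by blast
    then show ?thesis using vertex unfolding minkowski_sum_def by blast
  next
    case (simplex U' l')
    then have "x \<in> scaled_hull U' (of_nat h)"
      unfolding scaled_hull_def by (intro CollectI exI[of _ l']) (auto simp: less_imp_le)
    then obtain p where "p \<in> T" "x - p \<in> scaled_hull T (of_nat h - 1)"
      using lattice_point_peel_from_hull[OF finT sat latT x h simplex(1)] by blast
    moreover have "0 \<in> C" using C unfolding rat_convex_cone_def by blast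
    ultimately show ?thesis unfolding minkowski_sum_def by force
  qed
qed

lemma lattice_points_peel:
  fixes T :: "(rat ^ 'n) set"
  assumes finT: "finite T" and sat: "lattice_saturated T" and latT: "\<forall>t\<in>T. lattice_pt t"
    and C: "rat_convex_cone C" and h: "CARD('n) \<le> h + 1"
  shows "lattice_pt x \<Longrightarrow> x \<in> minkowski_sum (scaled_hull T (of_nat (h + j))) C \<Longrightarrow>
    \<exists>p. (\<forall>i<j. p i \<in> T) \<and> x - (\<Sum>i<j. p i) \<in> minkowski_sum (scaled_hull T (of_nat h)) C"
proof (induction j arbitrary: x)
  case 0
  then show ?case by simp
next
  case (Suc j)
  have "CARD('n) \<le> h + Suc j" using h by simp
  then obtain p0 where "p0 \<in> T" and "x - p0 \<in> minkowski_sum (scaled_hull T (of_nat (h + j))) C"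
    using lattice_point_peel[OF finT sat latT C Suc.prems(1)] Suc.prems(2) by force
  moreover have "lattice_pt (x - p0)" using Suc.prems(1) latT \<open>p0 \<in> T\<close>
    by (simp add: lattice_pt_diff)
  ultimately obtain p where p: "\<forall>i<j. p i \<in> T"
    "x - p0 - (\<Sum>i<j. p i) \<in> minkowski_sum (scaled_hull T (of_nat h)) C"
    using Suc.IH by blast
  have "(\<Sum>i<Suc j. (p(j := p0)) i) = (\<Sum>i<j. p i) + p0" by simp
  then have "x - (\<Sum>i<Suc j. (p(j := p0)) i) \<in> minkowski_sum (scaled_hull T (of_nat h)) C"
    using p(2) by (simp add: diff_diff_eq add.commute)
  moreover have "\<forall>i<Suc j. (p(j := p0)) i \<in> T" using p(1) \<open>p0 \<in> T\<close> by (simp add: less_Suc_eq)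
  ultimately show ?case by blast
qed

section \<open>Normality\<close>

lemma dual_cone_rat_convex_cone: "rat_convex_cone (dual_cone \<sigma>)"
proof -
  have pairing_eqs: "pairing 0 v = 0" "pairing (x + y) v = pairing x v + pairing y v"
    "pairing (r *s x) v = r * pairing x v" for x y v r
    unfolding pairing_def by (simp_all add: distrib_right sum.distrib sum_distrib_left mult.assoc)
  show ?thesis unfolding rat_convex_cone_def dual_cone_def by (auto simp: pairing_eqs)
qed

lemma dilate_dilate: "dilate k (dilate e P) = dilate (k * e) P"
  unfolding dilate_def image_image by (simp add: vec.scale_scale mult.commute)

lemma dilate_minkowski_scaled_hull:
  fixes V :: "(rat ^ 'n) set"
  assumes C: "rat_convex_cone C" and "0 < m"
  shows "dilate m (minkowski_sum (scaled_hull V 1) C) = minkowski_sum (scaled_hull V (of_nat m)) C"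
proof (intro equalityI subsetI)
  fix x assume "x \<in> dilate m (minkowski_sum (scaled_hull V 1) C)"
  then obtain a b where "a \<in> scaled_hull V 1" "b \<in> C" "x = of_nat m *s a + of_nat m *s b"
    unfolding dilate_def minkowski_sum_def by (auto simp: vec.scale_right_distrib)
  moreover have "of_nat m *s a \<in> scaled_hull V (of_nat m)"
    using scaled_hull_scale[OF \<open>a \<in> scaled_hull V 1\<close>, of "of_nat m"] by simp
  moreover have "of_nat m *s b \<in> C" using C \<open>b \<in> C\<close> unfolding rat_convex_cone_def by simp
  ultimately show "x \<in> minkowski_sum (scaled_hull V (of_nat m)) C" unfolding minkowski_sum_def
    by blast
next
  fix x assume "x \<in> minkowski_sum (scaled_hull V (of_nat m)) C"
  then obtain q c where "q \<in> scaled_hull V (of_nat m)" "c \<in> C" "x = q + c"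
    unfolding minkowski_sum_def by blast
  moreover have "(1 / of_nat m) *s q \<in> scaled_hull V 1"
    using scaled_hull_scale[OF \<open>q \<in> scaled_hull V (of_nat m)\<close>, of "1 / of_nat m"] \<open>0 < m\<close> by simp
  moreover have "(1 / of_nat m) *s c \<in> C" using C \<open>c \<in> C\<close> unfolding rat_convex_cone_def by simp
  moreover have "x = of_nat m *s ((1 / of_nat m) *s q + (1 / of_nat m) *s c)"
    using \<open>x = q + c\<close> \<open>0 < m\<close> by (simp add: vec.scale_right_distrib)
  ultimately show "x \<in> dilate m (minkowski_sum (scaled_hull V 1) C)"
    unfolding dilate_def minkowski_sum_def by blast
qed

lemma sum_in_minkowski_scaled_hull:
  fixes V :: "(rat ^ 'n) set"
  assumes C: "rat_convex_cone C" and "finite I"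
    and "\<forall>i\<in>I. x i \<in> minkowski_sum (scaled_hull V (h i)) C"
  shows "(\<Sum>i\<in>I. x i) \<in> minkowski_sum (scaled_hull V (\<Sum>i\<in>I. h i)) C"
  using assms(2,3)
proof (induction I rule: finite_induct)
  case empty
  then show ?case using C zero_in_scaled_hull unfolding rat_convex_cone_def minkowski_sum_def
    by force
next
  case (insert i I)
  then obtain q c q' c' where "q \<in> scaled_hull V (h i)" "c \<in> C" "x i = q + c"
    "q' \<in> scaled_hull V (\<Sum>i\<in>I. h i)" "c' \<in> C" "(\<Sum>i\<in>I. x i) = q' + c'"
    unfolding minkowski_sum_def by auto
  moreover from this have "q + q' \<in> scaled_hull V (h i + (\<Sum>i\<in>I. h i))" "c + c' \<in> C"
    using C scaled_hull_add unfolding rat_convex_cone_def by blast+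
  ultimately show ?case using insert.hyps unfolding minkowski_sum_def
    by (intro CollectI exI[of _ "q + q'"] exI[of _ "c + c'"]) (simp add: algebra_simps)
qed

lemma lattice_point_decomposition:
  fixes T :: "(rat ^ 'n) set"
  assumes finT: "finite T" and sat: "lattice_saturated T" and latT: "\<forall>t\<in>T. lattice_pt t"
    and C: "rat_convex_cone C" and e: "CARD('n) \<le> e + 1"
  shows "lattice_pt x \<Longrightarrow> x \<in> minkowski_sum (scaled_hull T (of_nat (Suc k * e))) C \<Longrightarrow>
    \<exists>m. (\<forall>i<Suc k. m i \<in> minkowski_sum (scaled_hull T (of_nat e)) C \<and> lattice_pt (m i)) \<and>
      x = (\<Sum>i<Suc k. m i)"
proof (induction k arbitrary: x)
  case 0
  then show ?case by (intro exI[of _ "\<lambda>_. x"]) simp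
next
  case (Suc k)
  have "CARD('n) \<le> Suc k * e + 1" using e by (simp add: trans_le_add1)
  moreover have "Suc (Suc k) * e = Suc k * e + e" by simp
  ultimately obtain p where p: "\<forall>i<e. p i \<in> T"
    "x - (\<Sum>i<e. p i) \<in> minkowski_sum (scaled_hull T (of_nat (Suc k * e))) C"
    using lattice_points_peel[OF finT sat latT C _ Suc.prems(1), of "Suc k * e" e] Suc.prems(2)
    by metis
  have lat_p: "lattice_pt (\<Sum>i<e. p i)" using p(1) latT by (intro lattice_pt_sum) auto
  then have "lattice_pt (x - (\<Sum>i<e. p i))" using Suc.prems(1) by (simp add: lattice_pt_diff)
  then obtain m where
    m: "\<forall>i<Suc k. m i \<in> minkowski_sum (scaled_hull T (of_nat e)) C \<and> lattice_pt (m i)"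
    "x - (\<Sum>i<e. p i) = (\<Sum>i<Suc k. m i)"
    using Suc.IH p(2) by blast
  have "(\<Sum>i<e. p i) \<in> scaled_hull T (\<Sum>i<e. 1)"
    using p(1) vertex_in_scaled_hull[OF finT] by (intro scaled_hull_sum) auto
  then have block: "(\<Sum>i<e. p i) \<in> minkowski_sum (scaled_hull T (of_nat e)) C"
    using C unfolding rat_convex_cone_def minkowski_sum_def by force
  define m' where "m' = m(Suc k := \<Sum>i<e. p i)"
  have "\<forall>i<Suc (Suc k). m' i \<in> minkowski_sum (scaled_hull T (of_nat e)) C \<and> lattice_pt (m' i)"
    using m(1) lat_p block unfolding m'_def by (simp add: less_Suc_eq)
  moreover have "x = (\<Sum>i<Suc (Suc k). m' i)" using m(2) unfolding m'_def by (simp add: algebra_simps)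
  ultimately show ?case by blast
qed

lemma normal_polyhedron_dilate_minkowski:
  fixes T :: "(rat ^ 'n) set"
  assumes finT: "finite T" and sat: "lattice_saturated T" and latT: "\<forall>t\<in>T. lattice_pt t"
    and C: "rat_convex_cone C" and "1 \<le> e" and e: "CARD('n) \<le> e + 1"
  shows "normal_polyhedron (dilate e (minkowski_sum (scaled_hull T 1) C))"
  unfolding normal_polyhedron_def
proof (intro allI impI)
  fix k :: nat assume "1 \<le> k"
  then obtain k' where k: "k = Suc k'" using not0_implies_Suc by fastforce
  define P where "P h = minkowski_sum (scaled_hull T (of_nat h)) C" for h
  have "dilate k (dilate e (minkowski_sum (scaled_hull T 1) C)) = P (k * e)"
    "dilate e (minkowski_sum (scaled_hull T 1) C) = P e"
    unfolding P_def dilate_dilate using dilate_minkowski_scaled_hull[OF C] \<open>1 \<le> e\<close> \<open>1 \<le> k\<close>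
      by simp_all
  moreover have "(\<Sum>i<k. m i) \<in> P (k * e)" if "\<forall>i<k. m i \<in> P e" for m
  proof -
    have "(\<Sum>i<k. m i) \<in> minkowski_sum (scaled_hull T (\<Sum>i<k. of_nat e)) C"
      using that by (intro sum_in_minkowski_scaled_hull[OF C]) (auto simp: P_def)
    then show ?thesis unfolding P_def by simp
  qed
  moreover have "\<exists>m. (\<forall>i<k. m i \<in> P e \<and> lattice_pt (m i)) \<and> x = (\<Sum>i<k. m i)"
    if "lattice_pt x" "x \<in> P (k * e)" for x
    using lattice_point_decomposition[OF finT sat latT C e that(1)] that(2) unfolding P_def k
      by blast
  ultimately show "{x \<in> dilate k (dilate e (minkowski_sum (scaled_hull T 1) C)). lattice_pt x} =
    {x. \<exists>m. (\<forall>i<k. m i \<in> dilate e (minkowski_sum (scaled_hull T 1) C) \<and> lattice_pt (m i)) \<and>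
      x = (\<Sum>i<k. m i)}"
    by (auto intro: lattice_pt_sum)
qed

lemma finite_lattice_points_scaled_hull:
  fixes V :: "(rat ^ 'n) set"
  assumes finV: "finite V"
  shows "finite {t \<in> scaled_hull V 1. lattice_pt t}"
proof -
  define N where "N i = \<lceil>\<Sum>v\<in>V. \<bar>v $ i\<bar>\<rceil>" for i
  have "{t \<in> scaled_hull V 1. lattice_pt t} \<subseteq> (\<lambda>f. \<chi> i. of_int (f i)) ` (\<Pi>\<^sub>E i\<in>UNIV. {- N i..N i})"
  proof
    fix t assume "t \<in> {t \<in> scaled_hull V 1. lattice_pt t}"
    then obtain c where c: "\<forall>v\<in>V. 0 \<le> c v" "(\<Sum>v\<in>V. c v) = 1" "t = (\<Sum>v\<in>V. c v *s v)"
      and "lattice_pt t" unfolding scaled_hull_def by blast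
    have c_le_1: "c v \<le> 1" if "v \<in> V" for v
      using member_le_sum[OF that, of c] c(1,2) finV by simp
    have "\<bar>t $ i\<bar> \<le> (\<Sum>v\<in>V. \<bar>v $ i\<bar>)" for i
    proof -
      have "\<bar>t $ i\<bar> \<le> (\<Sum>v\<in>V. \<bar>c v * v $ i\<bar>)" unfolding c(3) by (simp add: sum_component sum_abs)
      also have "\<dots> \<le> (\<Sum>v\<in>V. \<bar>v $ i\<bar>)"
        using c(1) c_le_1 by (intro sum_mono) (simp add: abs_mult mult_left_le_one_le)
      finally show ?thesis .
    qed
    then have "\<bar>t $ i\<bar> \<le> of_int (N i)" for i unfolding N_def
      by (meson le_of_int_ceiling order_trans)
    moreover have "t $ i = of_int \<lfloor>t $ i\<rfloor>" for i
      using \<open>lattice_pt t\<close> unfolding lattice_pt_def by simp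
    ultimately have "\<lfloor>t $ i\<rfloor> \<in> {- N i..N i}" for i
      by (metis abs_le_iff atLeastAtMost_iff minus_le_iff of_int_abs of_int_le_iff)
    moreover have "t = (\<chi> i. of_int \<lfloor>t $ i\<rfloor>)"
      using \<open>lattice_pt t\<close> unfolding lattice_pt_def by (simp add: vec_eq_iff)
    ultimately show "t \<in> (\<lambda>f. \<chi> i. of_int (f i)) ` (\<Pi>\<^sub>E i\<in>UNIV. {- N i..N i})" by fastforce
  qed
  then show ?thesis by (rule finite_subset) (simp add: finite_PiE)
qed

theorem theorem3p6:
  fixes \<sigma> :: "(rat ^ 'n) set" and V :: "(rat ^ 'n) set" and e :: nat
  assumes "rational_polyhedral_cone \<sigma>"
    and "pointed_cone \<sigma>"
    and "finite V" and "V \<noteq> {}" and "\<forall>v\<in>V. lattice_pt v"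
    and "e \<ge> 1" and "e \<ge> CARD('n) - 1"
  shows "normal_polyhedron (dilate e (minkowski_sum (rat_conv V) (dual_cone \<sigma>)))"
proof -
  define T where "T = {t \<in> scaled_hull V 1. lattice_pt t}"
  have finT: "finite T" unfolding T_def using assms(3) by (rule finite_lattice_points_scaled_hull)
  have "V \<subseteq> T" unfolding T_def using assms(3,5) vertex_in_scaled_hull by blast
  then have hull_T: "scaled_hull T 1 = scaled_hull V 1"
    using scaled_hull_mono[OF _ finT] scaled_hull_subset_scaled_hull[OF finT] unfolding T_def
      by blast
  then have "lattice_saturated T" unfolding lattice_saturated_def T_def by blast
  moreover have "\<forall>t\<in>T. lattice_pt t" unfolding T_def by blast
  moreover have "CARD('n) \<le> e + 1" using assms(7) by linarith
  \<comment> \<open>only the convexity of the dual cone is used, not the hypotheses on \<sigma>\<close>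
  ultimately have "normal_polyhedron (dilate e (minkowski_sum (scaled_hull T 1) (dual_cone \<sigma>)))"
    using normal_polyhedron_dilate_minkowski[OF finT _ _ dual_cone_rat_convex_cone assms(6)]
      by blast
  then show ?thesis unfolding rat_conv_eq_scaled_hull hull_T .
qed

end
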